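(* Let $A$ be an algebra over a field of characteristic zero satisfying $(x^2,x^2,x^2)=0$ for all $x\in A$, and assume $A$ has a left unit $e$ which is not a divisor of zero. Then $(xe)e=x$ for all $x\in A$.
   Context: $(x,y,z)=(xy)z-x(yz)$. A left unit $e$ satisfies $ex=x$ for all $x$. *)

theory Defs
  imports Main "HOL.Vector_Spaces"
begin

definition nonassoc_algebra ::
  "('k::field \<Rightarrow> 'v::ab_group_add \<Rightarrow> 'v) \<Rightarrow> ('v \<Rightarrow> 'v \<Rightarrow> 'v) \<Rightarrow> bool" where
  "nonassoc_algebra scale mult \<longleftrightarrow>
     vector_space scale \<and>
     (\<forall>x y z. mult (x + y) z = mult x z + mult y z) \<and>
     (\<forall>x y z. mult x (y + z) = mult x y + mult x z) \<and>
     (\<forall>c x y. mult (scale c x) y = scale c (mult x y)) \<and>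
     (\<forall>c x y. mult x (scale c y) = scale c (mult x y))"

definition associator :: "('v::ab_group_add \<Rightarrow> 'v \<Rightarrow> 'v) \<Rightarrow> 'v \<Rightarrow> 'v \<Rightarrow> 'v \<Rightarrow> 'v" where
  "associator mult x y z = mult (mult x y) z - mult x (mult y z)"

definition left_unit :: "('v \<Rightarrow> 'v \<Rightarrow> 'v) \<Rightarrow> 'v \<Rightarrow> bool" where
  "left_unit mult e \<longleftrightarrow> (\<forall>x. mult e x = x)"

definition zero_divisor :: "('v::zero \<Rightarrow> 'v \<Rightarrow> 'v) \<Rightarrow> 'v \<Rightarrow> bool" where
  "zero_divisor mult e \<longleftrightarrow> (\<exists>x. x \<noteq> 0 \<and> (mult e x = 0 \<or> mult x e = 0))"

end

theory Submission
  imports Defs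
begin

text \<open>Linearize the identity at \<open>x = e + t y\<close>: then \<open>x\<^sup>2 = e + t u + t\<^sup>2 y\<^sup>2\<close> with
  \<open>u = y + y e\<close>, and the associator \<open>(x\<^sup>2, x\<^sup>2, x\<^sup>2)\<close> is a polynomial in \<open>t\<close> vanishing identically,
  so in characteristic zero its coefficient of \<open>t\<close>, namely \<open>(u, e, e) + (e, u, e) + (e, e, u)\<close>,
  vanishes. The last two terms are zero because \<open>e\<close> is a left unit, so \<open>(u e) e = u e\<close>, which
  unfolds to \<open>((y e) e - y) e = 0\<close>; as \<open>e\<close> is not a zero divisor, \<open>(y e) e = y\<close>.\<close>

definition trilinear ::
    "('k::comm_ring_1 \<Rightarrow> 'v::ab_group_add \<Rightarrow> 'v) \<Rightarrow> ('v \<Rightarrow> 'v \<Rightarrow> 'v \<Rightarrow> 'v) \<Rightarrow> bool"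
  where "trilinear scale T \<longleftrightarrow>
    (\<forall>y z. module_hom scale scale (\<lambda>x. T x y z)) \<and>
    (\<forall>x z. module_hom scale scale (\<lambda>y. T x y z)) \<and>
    (\<forall>x y. module_hom scale scale (\<lambda>z. T x y z))"

lemma
  assumes "trilinear scale T"
  shows trilinear_linear1: "module_hom scale scale (\<lambda>x. T x y z)"
    and trilinear_linear2: "module_hom scale scale (\<lambda>y. T x y z)"
    and trilinear_linear3: "module_hom scale scale (\<lambda>z. T x y z)"
  using assms unfolding trilinear_def by blast+

lemma trilinear_sum:
  assumes "trilinear scale T"
  shows "T (\<Sum>i\<in>I. f i) (\<Sum>j\<in>J. g j) (\<Sum>l\<in>L. h l) =
    (\<Sum>(i, j, l)\<in>I \<times> J \<times> L. T (f i) (g j) (h l))"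
proof -
  have "T (\<Sum>i\<in>I. f i) (\<Sum>j\<in>J. g j) (\<Sum>l\<in>L. h l) =
      (\<Sum>i\<in>I. \<Sum>j\<in>J. \<Sum>l\<in>L. T (f i) (g j) (h l))"
    by (simp only: module_hom.sum[OF trilinear_linear1[OF assms]],
        simp only: module_hom.sum[OF trilinear_linear2[OF assms]],
        simp only: module_hom.sum[OF trilinear_linear3[OF assms]])
  then show ?thesis
    by (simp add: sum.cartesian_product)
qed

lemma trilinear_scale:
  assumes "trilinear scale T"
  shows "T (scale a x) (scale b y) (scale c z) = scale (a * b * c) (T x y z)"
proof -
  interpret module scale
    using module_hom.axioms(1)[OF trilinear_linear1[OF assms]] .
  show ?thesis
    by (simp add: module_hom.scale[OF trilinear_linear1[OF assms]]
        module_hom.scale[OF trilinear_linear2[OF assms]] module_hom.scale[OF trilinear_linear3[OF assms]]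
        mult_ac)
qed

definition cube_coeff :: "('v::comm_monoid_add \<Rightarrow> 'v \<Rightarrow> 'v \<Rightarrow> 'v) \<Rightarrow> (nat \<Rightarrow> 'v) \<Rightarrow> nat \<Rightarrow> nat \<Rightarrow> 'v"
  where "cube_coeff T a n k =
    (\<Sum>(i, j, l)\<in>{(i, j, l). i \<le> n \<and> j \<le> n \<and> l \<le> n \<and> i + j + l = k}. T (a i) (a j) (a l))"

lemma cube_coeff_1:
  assumes "1 \<le> n"
  shows "cube_coeff T a n 1 = T (a 1) (a 0) (a 0) + T (a 0) (a 1) (a 0) + T (a 0) (a 0) (a 1)"
proof -
  have "{(i, j, l). i \<le> n \<and> j \<le> n \<and> l \<le> n \<and> i + j + l = (1::nat)} = {(1, 0, 0), (0, 1, 0), (0, 0, 1)}"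
    using assms by auto
  then show ?thesis
    by (simp add: cube_coeff_def add.assoc)
qed

lemma trilinear_cube_poly_expansion:
  assumes "trilinear scale T"
  shows "T (\<Sum>i\<le>n. scale (t ^ i) (a i)) (\<Sum>i\<le>n. scale (t ^ i) (a i)) (\<Sum>i\<le>n. scale (t ^ i) (a i)) =
    (\<Sum>k\<le>3 * n. scale (t ^ k) (cube_coeff T a n k))"
proof -
  interpret module scale
    using module_hom.axioms(1)[OF trilinear_linear1[OF assms]] .
  let ?D = "{..n} \<times> {..n} \<times> {..n}"
  let ?term = "\<lambda>(i, j, l). scale (t ^ (i + j + l)) (T (a i) (a j) (a l))"
  have "T (\<Sum>i\<le>n. scale (t ^ i) (a i)) (\<Sum>i\<le>n. scale (t ^ i) (a i)) (\<Sum>i\<le>n. scale (t ^ i) (a i)) =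
      sum ?term ?D"
    by (simp add: trilinear_sum[OF assms] trilinear_scale[OF assms] power_add case_prod_beta)
  also have "\<dots> = (\<Sum>k\<le>3 * n. sum ?term {x \<in> ?D. (\<lambda>(i, j, l). i + j + l) x = k})"
    by (rule sum.group[symmetric]) auto
  also have "\<dots> = (\<Sum>k\<le>3 * n. scale (t ^ k) (cube_coeff T a n k))"
  proof (rule sum.cong)
    fix k
    have "{x \<in> ?D. (\<lambda>(i, j, l). i + j + l) x = k} =
        {(i, j, l). i \<le> n \<and> j \<le> n \<and> l \<le> n \<and> i + j + l = k}"
      by auto
    then show "sum ?term {x \<in> ?D. (\<lambda>(i, j, l). i + j + l) x = k} = scale (t ^ k) (cube_coeff T a n k)"
      by (auto simp: cube_coeff_def scale_sum_right intro: sum.cong)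
  qed simp
  finally show ?thesis .
qed

text \<open>Comparing the polynomial at \<open>2 t\<close> with \<open>2 ^ Suc n\<close> times its value at \<open>t\<close> kills the
  top coefficient and rescales the others by the nonzero factors \<open>2 ^ k - 2 ^ Suc n\<close>.\<close>

lemma vector_space_poly_coeffs_eq_0:
  fixes scale :: "'k::field_char_0 \<Rightarrow> 'v::ab_group_add \<Rightarrow> 'v"
  assumes "vector_space scale"
    and "\<And>t. (\<Sum>k\<le>n. scale (t ^ k) (c k)) = 0"
    and "k \<le> n"
  shows "c k = 0"
  using assms(2,3)
proof (induction n arbitrary: c k)
  case 0
  interpret vector_space scale by fact
  show ?case
    using "0.prems"(1)[of 1] "0.prems"(2) by simp
next
  case (Suc n)
  interpret vector_space scale by fact
  define c' where "c' k = scale (2 ^ k - 2 ^ Suc n) (c k)" for k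
  have "(\<Sum>k\<le>n. scale (t ^ k) (c' k)) = 0" for t
  proof -
    have "(\<Sum>k\<le>n. scale (t ^ k) (c' k)) = (\<Sum>k\<le>Suc n. scale (t ^ k) (c' k))"
      by (simp add: c'_def)
    also have "\<dots> = (\<Sum>k\<le>Suc n. scale ((2 * t) ^ k) (c k)) -
        scale (2 ^ Suc n) (\<Sum>k\<le>Suc n. scale (t ^ k) (c k))"
      by (simp add: c'_def scale_sum_right sum_subtractf[symmetric] scale_left_diff_distrib
          scale_right_diff_distrib power_mult_distrib algebra_simps)
    also have "\<dots> = 0"
      by (simp only: Suc.prems(1)) simp
    finally show ?thesis .
  qed
  then have "c' k = 0" if "k \<le> n" for k
    using Suc.IH that by blast
  moreover have "(2::'k) ^ k \<noteq> 2 ^ Suc n" if "k \<le> n" for k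
  proof -
    have "(2::nat) ^ k < 2 ^ Suc n"
      using that by (intro power_strict_increasing) auto
    then show ?thesis
      by (metis nat_neq_iff of_nat_eq_iff of_nat_numeral of_nat_power)
  qed
  ultimately have low: "c k = 0" if "k \<le> n" for k
    using that by (simp add: c'_def)
  moreover have "c (Suc n) = 0"
    using Suc.prems(1)[of 1] low by simp
  ultimately show ?case
    using Suc.prems(2) le_Suc_eq by blast
qed

lemma trilinear_cube_poly_eq_0_imp_cube_coeff_eq_0:
  fixes scale :: "'k::field_char_0 \<Rightarrow> 'v::ab_group_add \<Rightarrow> 'v"
  assumes "trilinear scale T"
    and "\<And>t. T (\<Sum>i\<le>n. scale (t ^ i) (a i)) (\<Sum>i\<le>n. scale (t ^ i) (a i))
      (\<Sum>i\<le>n. scale (t ^ i) (a i)) = 0"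
    and "k \<le> 3 * n"
  shows "cube_coeff T a n k = 0"
proof (rule vector_space_poly_coeffs_eq_0)
  show "vector_space scale"
    using module_hom.axioms(1)[OF trilinear_linear1[OF assms(1)]] by (simp add: module_iff_vector_space)
  show "(\<Sum>k\<le>3 * n. scale (t ^ k) (cube_coeff T a n k)) = 0" for t
    using assms(2) by (simp add: trilinear_cube_poly_expansion[OF assms(1), symmetric])
qed fact

lemma nonassoc_algebra_iff_bilinear:
  "nonassoc_algebra scale mult \<longleftrightarrow> vector_space scale \<and>
    (\<forall>y. module_hom scale scale (\<lambda>x. mult x y)) \<and> (\<forall>x. module_hom scale scale (mult x))"
  by (auto simp: nonassoc_algebra_def module_hom_iff module_iff_vector_space)

lemma nonassoc_algebra_trilinear_associator:
  assumes "nonassoc_algebra scale mult"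
  shows "trilinear scale (associator mult)"
proof -
  have vs: "vector_space scale"
    and left: "\<And>y. module_hom scale scale (\<lambda>x. mult x y)"
    and right: "\<And>x. module_hom scale scale (mult x)"
    using assms by (auto simp: nonassoc_algebra_iff_bilinear)
  interpret module_pair scale scale
    using vs by (simp add: module_pair_def module_iff_vector_space)
  have comp: "module_hom scale scale (\<lambda>x. g (f x))"
    if "module_hom scale scale f" "module_hom scale scale g" for f g
    using module_hom_compose[OF that] by (simp add: comp_def)
  show ?thesis
    unfolding trilinear_def associator_def
    by (intro allI conjI module_hom_sub comp[OF left left] comp[OF right left] comp[OF left right]
        comp[OF right right] left right)
qed

theorem lemma1:
  fixes scale :: "'k::field_char_0 \<Rightarrow> 'v::ab_group_add \<Rightarrow> 'v"
    and mult :: "'v \<Rightarrow> 'v \<Rightarrow> 'v"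
    and e :: 'v
  assumes "nonassoc_algebra scale mult"
    and "\<forall>x. associator mult (mult x x) (mult x x) (mult x x) = 0"
    and "left_unit mult e"
    and "\<not> zero_divisor mult e"
  shows "\<forall>x. mult (mult x e) e = x"
proof
  fix y
  interpret vector_space scale
    using assms(1) by (simp add: nonassoc_algebra_def)
  have left: "\<And>x. module_hom scale scale (\<lambda>z. mult z x)"
    and right: "\<And>x. module_hom scale scale (mult x)"
    using assms(1) by (auto simp: nonassoc_algebra_iff_bilinear)
  have unit: "\<And>x. mult e x = x"
    using assms(3) by (simp add: left_unit_def)
  define u where "u = y + mult y e"
  have square: "mult (e + scale t y) (e + scale t y) = (\<Sum>i\<le>2. scale (t ^ i) ([e, u, mult y y] ! i))"
    for t
    by (simp add: module_hom.add[OF left] module_hom.add[OF right] module_hom.scale[OF left]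
        module_hom.scale[OF right] unit u_def numeral_2_eq_2 power2_eq_square scale_right_distrib algebra_simps)
  have "cube_coeff (associator mult) ((!) [e, u, mult y y]) 2 1 = 0"
  proof (rule trilinear_cube_poly_eq_0_imp_cube_coeff_eq_0)
    show "trilinear scale (associator mult)"
      using assms(1) by (rule nonassoc_algebra_trilinear_associator)
    show "associator mult (\<Sum>i\<le>2. scale (t ^ i) ([e, u, mult y y] ! i))
        (\<Sum>i\<le>2. scale (t ^ i) ([e, u, mult y y] ! i)) (\<Sum>i\<le>2. scale (t ^ i) ([e, u, mult y y] ! i)) = 0"
      for t
      using spec[OF assms(2), of "e + scale t y"] by (simp only: square)
  qed simp
  then have "associator mult u e e = 0"
    by (simp add: cube_coeff_1 associator_def unit del: One_nat_def)
  then have "mult (mult (mult y e) e - y) e = 0"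
    by (simp add: associator_def unit u_def module_hom.add[OF left] module_hom.diff[OF left])
  then show "mult (mult y e) e = y"
    using assms(4) unfolding zero_divisor_def by (metis eq_iff_diff_eq_0)
qed

end
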